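(* Let $H$ be a Hilbert space and let $A_1,\dots,A_n$ and $B_1,\dots,B_n$ be strictly positive bounded operators on $H$ with $\sum_{j=1}^n A_j=\sum_{j=1}^n B_j=I$. Then, in the operator order, $$\sum_{j=1}^n S_{-2}(A_j|B_j)\le \sum_{j=1}^n A_jB_j^{-1}A_j-\sum_{j=1}^n A_jB_j^{-1}A_jB_j^{-1}A_j\le \sum_{j=1}^n S_{-1}(A_j|B_j)\le I-\sum_{j=1}^n A_jB_j^{-1}A_j$$ $$\le \sum_{j=1}^n S_0(A_j|B_j)\le 0\le \sum_{j=1}^n S_1(A_j|B_j)\le \sum_{j=1}^n B_jA_j^{-1}B_j-I\le \sum_{j=1}^n S_2(A_j|B_j).$$
   Context: A bounded operator $T$ on $H$ is strictly positive ($T>0$) if $(Tx,x)\ge0$ for all $x$ and $T$ is invertible; $X\le Y$ means $((Y-X)x,x)\ge 0$ for all $x$. $I$ is the identity. Powers and $\log$ of strictly positive operators are defined by functional calculus. For $A>0$, $B>0$ and $\nu\in\mathbb{R}$, the generalized relative operator entropy is $S_\nu(A|B)=A^{1/2}(A^{-1/2}BA^{-1/2})^{\nu}(\log A^{-1/2}BA^{-1/2})A^{1/2}$; in particular $S_0(A|B)=A^{1/2}(\log A^{-1/2}BA^{-1/2})A^{1/2}$ is the relative operator entropy. *)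

theory Defs
  imports "HOL-Analysis.Analysis"
begin

definition opow :: "nat \<Rightarrow> ('a::real_normed_vector \<Rightarrow>\<^sub>L 'a) \<Rightarrow> ('a \<Rightarrow>\<^sub>L 'a)" where
  "opow k T = ((\<lambda>S. T o\<^sub>L S) ^^ k) id_blinfun"

definition op_le :: "('a::real_inner \<Rightarrow>\<^sub>L 'a) \<Rightarrow> ('a \<Rightarrow>\<^sub>L 'a) \<Rightarrow> bool" where
  "op_le X Y \<longleftrightarrow> (\<forall>x. 0 \<le> inner ((Y - X) x) x)"

definition op_invertible :: "('a::real_normed_vector \<Rightarrow>\<^sub>L 'a) \<Rightarrow> bool" where
  "op_invertible T \<longleftrightarrow> (\<exists>S. S o\<^sub>L T = id_blinfun \<and> T o\<^sub>L S = id_blinfun)"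

definition op_inv :: "('a::real_normed_vector \<Rightarrow>\<^sub>L 'a) \<Rightarrow> ('a \<Rightarrow>\<^sub>L 'a)" where
  "op_inv T = (SOME S. S o\<^sub>L T = id_blinfun \<and> T o\<^sub>L S = id_blinfun)"

(* Strictly positive operator (T > 0): (Tx,x) \<ge> 0 for all x and T invertible.
  On a real Hilbert space, self-adjointness (automatic in the complex case) is
  made explicit. *)
definition strictly_pos :: "('a::real_inner \<Rightarrow>\<^sub>L 'a) \<Rightarrow> bool" where
  "strictly_pos T \<longleftrightarrow>
     (\<forall>x y. inner (T x) y = inner x (T y)) \<and>
     (\<forall>x. 0 \<le> inner (T x) x) \<and> op_invertible T"

(* Functional calculus for strictly positive T: with M = norm T, the spectrum of
  T lies in [m, M] with m > 0, so X = I - T/M has norm < 1 and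
  log T = (ln M) I + log (I - X) = (ln M) I - \<Sum>_{k\<ge>1} X^k / k. *)
definition op_log :: "('a::{real_inner,complete_space} \<Rightarrow>\<^sub>L 'a) \<Rightarrow> ('a \<Rightarrow>\<^sub>L 'a)" where
  "op_log T = ln (norm T) *\<^sub>R id_blinfun
     - (\<Sum>k. (1 / real (Suc k)) *\<^sub>R opow (Suc k) (id_blinfun - (1 / norm T) *\<^sub>R T))"

definition op_powr :: "('a::{real_inner,complete_space} \<Rightarrow>\<^sub>L 'a) \<Rightarrow> real \<Rightarrow> ('a \<Rightarrow>\<^sub>L 'a)" where
  "op_powr T \<nu> = (\<Sum>k. (\<nu> ^ k / fact k) *\<^sub>R opow k (op_log T))"

definition gen_rel_entropy ::
  "real \<Rightarrow> ('a::{real_inner,complete_space} \<Rightarrow>\<^sub>L 'a) \<Rightarrow> ('a \<Rightarrow>\<^sub>L 'a) \<Rightarrow> ('a \<Rightarrow>\<^sub>L 'a)" where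
  "gen_rel_entropy \<nu> A B =
     (let C = op_powr A (-1/2) o\<^sub>L B o\<^sub>L op_powr A (-1/2)
      in op_powr A (1/2) o\<^sub>L op_powr C \<nu> o\<^sub>L op_log C o\<^sub>L op_powr A (1/2))"

end

theory Submission
  imports Defs
begin

(* Write C = A^(-1/2) B A^(-1/2) = exp Y with Y self-adjoint. Then S_nu(A|B) = A^(1/2) e^(nu Y) Y A^(1/2),
  while A, B, A B^-1 A, A B^-1 A B^-1 A and B A^-1 B are A^(1/2) e^(k Y) A^(1/2) for k = 0, 1, -1, -2, 2.
  The scalar inequalities e^(nu y) - e^((nu-1) y) <= e^(nu y) y <= e^((nu+1) y) - e^(nu y) hold in
  operator form because e^(nu Y) (e^(+-Y) - 1 -+ Y) is the congruence of the positive operator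
  e^(+-Y) - 1 -+ Y by e^(nu Y / 2). Summing over j, the terms A^(1/2) e^(k Y) A^(1/2) telescope
  against the normalisations sum A_j = sum B_j = I. *)

section \<open>Positive operators\<close>

lemma opow_0 [simp]: "opow 0 T = id_blinfun"
  and opow_Suc: "opow (Suc k) T = T o\<^sub>L opow k T"
  by (simp_all add: opow_def)

lemma blinfun_compose_assoc: "(R o\<^sub>L S) o\<^sub>L T = R o\<^sub>L (S o\<^sub>L T)"
  and blinfun_compose_id_left [simp]: "id_blinfun o\<^sub>L T = T"
  and blinfun_compose_id_right [simp]: "T o\<^sub>L id_blinfun = T"
  by (simp_all add: blinfun_eqI)

lemma blinfun_compose_eq_id_apply: "S o\<^sub>L T = id_blinfun \<Longrightarrow> S (T x) = x"
  by (metis blinfun_apply_blinfun_compose blinfun_apply_id_blinfun)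

lemma opow_Suc': "opow (Suc k) T = opow k T o\<^sub>L T"
  by (induction k) (simp_all add: opow_Suc flip: blinfun_compose_assoc)

lemma opow_scaleR: "opow k (c *\<^sub>R T) = c ^ k *\<^sub>R opow k T"
  by (induction k) (simp_all add: opow_Suc blinfun.bilinear_simps blinfun_eqI)

definition selfadjoint :: "('a::real_inner \<Rightarrow>\<^sub>L 'a) \<Rightarrow> bool"
  where "selfadjoint T \<longleftrightarrow> (\<forall>x y. inner (T x) y = inner x (T y))"

lemma op_le_iff_nonneg: "op_le X Y \<longleftrightarrow> op_le 0 (Y - X)"
  by (simp add: op_le_def)

lemma op_le_sum:
  assumes "\<And>j. j \<in> I \<Longrightarrow> op_le (f j) (g j)"
  shows "op_le (\<Sum>j\<in>I. f j) (\<Sum>j\<in>I. g j)"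
  using assms
  by (auto simp: op_le_def blinfun.bilinear_simps inner_sum_left simp flip: sum_subtractf
      intro: sum_nonneg)

lemma op_le_zero_add: "op_le 0 P \<Longrightarrow> op_le 0 Q \<Longrightarrow> op_le 0 (P + Q)"
  by (simp add: op_le_def blinfun.bilinear_simps inner_add_left)

lemma op_le_zero_scaleR: "op_le 0 P \<Longrightarrow> 0 \<le> c \<Longrightarrow> op_le 0 (c *\<^sub>R P)"
  by (simp add: op_le_def blinfun.bilinear_simps)

lemma op_le_zero_congruence: "selfadjoint Z \<Longrightarrow> op_le 0 P \<Longrightarrow> op_le 0 (Z o\<^sub>L P o\<^sub>L Z)"
  by (simp add: op_le_def selfadjoint_def)

lemma op_le_zero_square: "selfadjoint Z \<Longrightarrow> op_le 0 (Z o\<^sub>L Z)"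
  unfolding op_le_def selfadjoint_def by (metis blinfun_apply_blinfun_compose diff_zero inner_ge_zero)

lemma strictly_pos_iff: "strictly_pos T \<longleftrightarrow> selfadjoint T \<and> op_le 0 T \<and> op_invertible T"
  unfolding strictly_pos_def selfadjoint_def op_le_def by simp

lemma strictly_pos_selfadjoint: "strictly_pos T \<Longrightarrow> selfadjoint T"
  by (simp add: strictly_pos_iff)

lemma selfadjoint_id [simp]: "selfadjoint id_blinfun"
  by (simp add: selfadjoint_def)

lemma selfadjoint_diff: "selfadjoint S \<Longrightarrow> selfadjoint T \<Longrightarrow> selfadjoint (S - T)"
  and selfadjoint_scaleR: "selfadjoint T \<Longrightarrow> selfadjoint (c *\<^sub>R T)"
  and selfadjoint_minus: "selfadjoint T \<Longrightarrow> selfadjoint (- T)"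
  by (simp_all add: selfadjoint_def blinfun.bilinear_simps algebra_simps)

lemma selfadjoint_opow: "selfadjoint T \<Longrightarrow> selfadjoint (opow k T)"
proof (induction k)
  case (Suc k)
  then show ?case
    unfolding selfadjoint_def by (metis opow_Suc opow_Suc' blinfun_apply_blinfun_compose)
qed simp

lemma selfadjoint_suminf:
  fixes f :: "nat \<Rightarrow> ('a::{real_inner,complete_space} \<Rightarrow>\<^sub>L 'a)"
  assumes "summable f" "\<And>n. selfadjoint (f n)"
  shows "selfadjoint (suminf f)"
  unfolding selfadjoint_def
proof (intro allI)
  fix x y :: 'a
  have "bounded_linear (\<lambda>T::'a \<Rightarrow>\<^sub>L 'a. inner (T x) y)" "bounded_linear (\<lambda>T::'a \<Rightarrow>\<^sub>L 'a. inner x (T y))"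
    by (intro bounded_linear_compose[OF bounded_linear_inner_left blinfun.bounded_linear_left]
        bounded_linear_compose[OF bounded_linear_inner_right blinfun.bounded_linear_left])+
  from this[THEN bounded_linear.suminf, OF assms(1)] show "inner (suminf f x) y = inner x (suminf f y)"
    using assms(2) by (simp add: selfadjoint_def)
qed

lemma norm_apply_square_le:
  assumes T: "selfadjoint T" and M: "0 < M"
    and nonneg: "\<And>x. 0 \<le> inner (T x) x" and bound: "\<And>x. inner (T x) x \<le> M * norm x ^ 2"
  shows "norm (T x) ^ 2 \<le> M * inner (T x) x"
proof -
  \<comment> \<open>M (M (T x, x) - |v|^2) = (T u, u) + (M |v|^2 - (T v, v)) for v = T x and u = M x - v\<close>
  define v where "v = T x"
  have "inner (T v) x = inner v v"
    using T by (simp add: selfadjoint_def v_def)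
  then have "inner (T (M *\<^sub>R x - v)) (M *\<^sub>R x - v) = M * M * inner (T x) x - 2 * M * inner v v + inner (T v) v"
    by (simp add: v_def blinfun.bilinear_simps inner_diff_left inner_diff_right algebra_simps)
  moreover have "inner (T v) v \<le> M * inner v v"
    using bound[of v] by (simp add: power2_norm_eq_inner)
  ultimately have "0 \<le> M * (M * inner (T x) x - inner v v)"
    using nonneg[of "M *\<^sub>R x - v"] by (simp add: algebra_simps)
  then show ?thesis
    using M by (simp add: v_def zero_le_mult_iff power2_norm_eq_inner)
qed

lemma inner_apply_le_norm:
  fixes T :: "'a::real_inner \<Rightarrow>\<^sub>L 'a"
  shows "inner (T x) x \<le> norm T * norm x ^ 2"
proof -
  have "inner (T x) x \<le> norm (T x) * norm x"
    by (rule norm_cauchy_schwarz)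
  also have "\<dots> \<le> norm T * norm x * norm x"
    by (simp add: mult_right_mono norm_blinfun)
  finally show ?thesis
    by (simp add: power2_eq_square mult.assoc)
qed

lemma norm_selfadjoint_le:
  assumes "selfadjoint X" "0 < q" "\<And>x. 0 \<le> inner (X x) x" "\<And>x. inner (X x) x \<le> q * norm x ^ 2"
  shows "norm X \<le> q"
proof (rule norm_blinfun_bound)
  fix x
  have "norm (X x) ^ 2 \<le> q * inner (X x) x"
    by (rule norm_apply_square_le[OF assms])
  also have "\<dots> \<le> (q * norm x) ^ 2"
    using mult_left_mono[OF assms(4)[of x], of q] assms(2) by (simp add: power2_eq_square algebra_simps)
  finally show "norm (X x) \<le> q * norm x"
    using assms(2) by (simp add: power2_le_iff_abs_le)
qed (use assms(2) in simp)

lemma strictly_pos_coercive: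
  fixes T :: "'a::real_inner \<Rightarrow>\<^sub>L 'a"
  assumes "strictly_pos T" "T \<noteq> 0"
  obtains m where "0 < m" "\<And>x. m * norm x ^ 2 \<le> inner (T x) x"
proof -
  have T: "selfadjoint T" "\<And>x. 0 \<le> inner (T x) x"
    using assms(1) by (auto simp: strictly_pos_def selfadjoint_def)
  obtain S where "S o\<^sub>L T = id_blinfun"
    using assms(1) by (auto simp: strictly_pos_def op_invertible_def)
  then have S: "S (T x) = x" for x
    by (rule blinfun_compose_eq_id_apply)
  have "S \<noteq> 0"
  proof
    assume "S = 0"
    then have "x = 0" for x :: 'a
      using S[of x] by simp
    then have "T = 0"
      by (intro blinfun_eqI) simp
    with assms(2) show False ..
  qed
  define M where "M = norm T"
  have M: "0 < M"
    using assms(2) by (simp add: M_def)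
  have upper: "inner (T x) x \<le> M * norm x ^ 2" for x
    unfolding M_def by (rule inner_apply_le_norm)
  have "norm x ^ 2 \<le> (norm S ^ 2 * M) * inner (T x) x" for x
  proof -
    have "norm x ^ 2 \<le> (norm S * norm (T x)) ^ 2"
      using norm_blinfun[of S "T x"] by (simp add: S power_mono)
    also have "\<dots> \<le> norm S ^ 2 * (M * inner (T x) x)"
      unfolding power_mult_distrib
      by (rule mult_left_mono[OF norm_apply_square_le[OF T(1) M T(2) upper]]) simp
    finally show ?thesis
      by (simp add: mult.assoc)
  qed
  moreover have "0 < norm S ^ 2 * M"
    using M \<open>S \<noteq> 0\<close> by simp
  ultimately show ?thesis
    by (intro that[of "1 / (norm S ^ 2 * M)"]) (simp_all add: field_simps)
qed

lemma norm_id_minus_normalized_less_one: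
  fixes T :: "'a::real_inner \<Rightarrow>\<^sub>L 'a"
  assumes "strictly_pos T"
  shows "norm (id_blinfun - (1 / norm T) *\<^sub>R T) < 1"
proof (cases "T = 0")
  case True
  then have "id_blinfun = (0 :: 'a \<Rightarrow>\<^sub>L 'a)"
    using assms by (auto simp: strictly_pos_def op_invertible_def)
  with True show ?thesis
    by simp
next
  case False
  obtain m where m: "0 < m" "\<And>x. m * norm x ^ 2 \<le> inner (T x) x"
    using strictly_pos_coercive[OF assms False] by blast
  define M where "M = norm T"
  have M: "0 < M"
    using False by (simp add: M_def)
  define X where "X = id_blinfun - (1 / M) *\<^sub>R T"
  define q where "q = max (1 - m / M) (1 / 2)"
  have X: "inner (X x) x = norm x ^ 2 - inner (T x) x / M" for x
    by (simp add: X_def blinfun.bilinear_simps inner_diff_left power2_norm_eq_inner)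
  have "norm X \<le> q"
  proof (rule norm_selfadjoint_le)
    show "selfadjoint X"
      unfolding X_def by (intro selfadjoint_diff selfadjoint_scaleR selfadjoint_id strictly_pos_selfadjoint assms)
    show "0 < q"
      by (simp add: q_def)
    show "0 \<le> inner (X x) x" for x
      using inner_apply_le_norm[of T x] M by (simp add: X M_def field_simps)
    show "inner (X x) x \<le> q * norm x ^ 2" for x
    proof -
      have "inner (X x) x \<le> (1 - m / M) * norm x ^ 2"
        using m(2)[of x] M by (simp add: X field_simps)
      also have "\<dots> \<le> q * norm x ^ 2"
        by (simp add: q_def mult_right_mono)
      finally show ?thesis .
    qed
  qed
  moreover have "q < 1"
    using m(1) M by (simp add: q_def)
  ultimately show ?thesis
    by (simp add: X_def M_def)
qed

lemma op_inv_eqI: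
  assumes "op_invertible T" "T o\<^sub>L R = id_blinfun"
  shows "op_inv T = R"
proof -
  have "op_inv T o\<^sub>L T = id_blinfun"
    using someI_ex[OF assms(1)[unfolded op_invertible_def]] by (simp add: op_inv_def)
  then have "op_inv T = op_inv T o\<^sub>L (T o\<^sub>L R)"
    using assms(2) by simp
  also have "\<dots> = R"
    using \<open>op_inv T o\<^sub>L T = id_blinfun\<close> by (simp flip: blinfun_compose_assoc)
  finally show ?thesis .
qed

lemma op_le_congruence: "selfadjoint Z \<Longrightarrow> op_le X Y \<Longrightarrow> op_le (Z o\<^sub>L X o\<^sub>L Z) (Z o\<^sub>L Y o\<^sub>L Z)"
  using op_le_zero_congruence[of Z "Y - X"]
  by (simp add: op_le_iff_nonneg[of "Z o\<^sub>L X o\<^sub>L Z"] op_le_iff_nonneg[of X] blinfun.bilinear_simps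
      bounded_bilinear.diff_left[OF bounded_bilinear_blinfun_compose]
      bounded_bilinear.diff_right[OF bounded_bilinear_blinfun_compose])

lemma strictly_pos_congruence:
  assumes B: "strictly_pos B" and K: "selfadjoint K" "K o\<^sub>L H = id_blinfun" "H o\<^sub>L K = id_blinfun"
  shows "strictly_pos (K o\<^sub>L B o\<^sub>L K)"
proof -
  obtain S where S: "S o\<^sub>L B = id_blinfun" "B o\<^sub>L S = id_blinfun"
    using B by (auto simp: strictly_pos_def op_invertible_def)
  have "op_invertible (K o\<^sub>L B o\<^sub>L K)"
    unfolding op_invertible_def
    using blinfun_compose_eq_id_apply[OF K(2)] blinfun_compose_eq_id_apply[OF K(3)]
      blinfun_compose_eq_id_apply[OF S(1)] blinfun_compose_eq_id_apply[OF S(2)]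
    by (intro exI[of _ "H o\<^sub>L S o\<^sub>L H"] conjI blinfun_eqI) simp_all
  moreover have "selfadjoint (K o\<^sub>L B o\<^sub>L K)"
    using B K(1) by (simp add: strictly_pos_iff selfadjoint_def)
  ultimately show ?thesis
    using B op_le_zero_congruence[OF K(1)] by (simp add: strictly_pos_iff)
qed

section \<open>Exponential and logarithm series in Banach algebras\<close>

lemma norm_exp_minus_one_minus_le:
  fixes d :: "'b::{real_normed_algebra_1,banach}"
  assumes "norm d \<le> 1"
  shows "norm (exp d - 1 - d) \<le> norm d ^ 2"
proof -
  let ?a = "\<lambda>n. inverse (fact (n + 2)) *\<^sub>R d ^ (n + 2)"
  let ?b = "\<lambda>n. inverse (fact (n + 2)) * norm d ^ (n + 2)"
  have ab: "norm (?a n) \<le> ?b n" for n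
    unfolding norm_scaleR abs_inverse abs_of_nonneg[OF fact_ge_zero]
    by (intro mult_left_mono norm_power_ineq) simp
  have b: "summable ?b"
    using summable_ignore_initial_segment[OF summable_exp_generic[of "norm d"], of 2]
    by (simp add: divide_inverse mult.commute)
  have a: "summable (\<lambda>n. norm (?a n))"
    by (rule summable_comparison_test'[OF b]) (use ab in simp)
  have "norm (exp d - 1 - d) = norm (\<Sum>n. ?a n)"
    by (subst exp_first_two_terms) simp
  also have "\<dots> \<le> (\<Sum>n. ?b n)"
    using summable_norm[OF a] suminf_le[OF ab a b] by linarith
  also have "\<dots> = exp (norm d) - 1 - norm d"
    using exp_first_two_terms[of "norm d"] by simp
  also have "\<dots> \<le> norm d ^ 2"
    using exp_bound[of "norm d"] assms by simp
  finally show ?thesis .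
qed

lemma has_derivative_exp_zero:
  "(exp has_derivative (\<lambda>h. h)) (at (0::'b::{real_normed_algebra_1,banach}) within S)"
proof (rule has_derivativeI_sandwich[where e=1 and H=norm])
  show "(0::real) < 1" by simp
  fix y :: 'b
  assume "y \<noteq> 0" "dist y 0 < 1"
  then show "norm (exp y - exp 0 - (y - 0)) / norm (y - 0) \<le> norm y"
    using norm_exp_minus_one_minus_le[of y]
    by (simp add: divide_le_eq power2_eq_square)
next
  show "bounded_linear (\<lambda>h::'b. h)" by (rule bounded_linear_ident)
  show "(norm \<longlongrightarrow> 0) (at (0::'b) within S)"
    using tendsto_norm_zero[OF tendsto_ident_at[of 0 S]] by simp
qed

lemma has_vector_derivative_exp_commuting:
  fixes F :: "real \<Rightarrow> 'b::{real_normed_algebra_1,banach}"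
  assumes F: "(F has_vector_derivative D) (at t within S)" and "t \<in> S"
    and comm: "\<And>s. s \<in> S \<Longrightarrow> F s * F t = F t * F s"
  shows "((\<lambda>s. exp (F s)) has_vector_derivative exp (F t) * D) (at t within S)"
proof -
  have "((\<lambda>s. F s - F t) has_derivative (\<lambda>h. h *\<^sub>R D)) (at t within S)"
    using F by (auto simp: has_vector_derivative_def intro!: derivative_eq_intros)
  then have "((\<lambda>s. exp (F s - F t)) has_vector_derivative D) (at t within S)"
    unfolding has_vector_derivative_def
    by (rule has_derivative_in_compose[where g = exp and g' = "\<lambda>h. h", simplified])
       (simp add: has_derivative_exp_zero)
  then have "((\<lambda>s. exp (F t) * exp (F s - F t)) has_vector_derivative exp (F t) * D) (at t within S)"
    by (rule has_vector_derivative_mult_right)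
  moreover have "exp (F s) = exp (F t) * exp (F s - F t)" if "s \<in> S" for s
    using exp_add_commuting[of "F t" "F s - F t"] comm[OF that] by (simp add: algebra_simps)
  ultimately show ?thesis
    by (rule has_vector_derivative_transform[OF \<open>t \<in> S\<close>, rotated])
qed

lemma suminf_commute:
  fixes f :: "nat \<Rightarrow> 'b::{real_normed_algebra,banach}"
  assumes "summable f" "\<And>n. a * f n = f n * a"
  shows "a * suminf f = suminf f * a"
  using suminf_mult[OF assms(1), of a] suminf_mult2[OF assms(1), of a] assms(2) by simp

lemma suminf_mult_suminf_commute:
  fixes f g :: "nat \<Rightarrow> 'b::{real_normed_algebra,banach}"
  assumes "summable f" "summable g" "\<And>m n. f m * g n = g n * f m"
  shows "suminf f * suminf g = suminf g * suminf f"
proof -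
  have "f m * suminf g = suminf g * f m" for m
    using suminf_commute[OF assms(2), of "f m"] assms(3) by simp
  then show ?thesis
    using suminf_commute[OF assms(1), of "suminf g"] by simp
qed

lemma norm_scaled_power_le:
  fixes x :: "'b::real_normed_algebra_1"
  assumes "0 \<le> c" "c \<le> 1"
  shows "norm (c *\<^sub>R x ^ k) \<le> norm x ^ k"
  using assms mult_mono[OF assms(2) norm_power_ineq[of x k]] by simp

lemma summable_scaled_powers:
  fixes x :: "'b::{real_normed_algebra_1,banach}"
  assumes "norm x < 1" "\<And>n. 0 \<le> c n" "\<And>n. c n \<le> 1"
  shows "summable (\<lambda>n. c n *\<^sub>R x ^ Suc n)"
proof (rule summable_comparison_test')
  show "summable (\<lambda>n. norm x ^ Suc n)"
    using assms(1) by (simp add: summable_mult)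
  show "norm (c n *\<^sub>R x ^ Suc n) \<le> norm x ^ Suc n" for n
    by (rule norm_scaled_power_le[OF assms(2,3)])
qed

lemma suminf_scaled_powers_mult:
  fixes x :: "'b::{real_normed_algebra_1,banach}"
  assumes "summable (\<lambda>n. t ^ n *\<^sub>R x ^ Suc n)"
  shows "(\<Sum>n. t ^ n *\<^sub>R x ^ Suc n) * (1 - t *\<^sub>R x) = x"
proof -
  have "(\<Sum>n. t ^ n *\<^sub>R x ^ Suc n) * (t *\<^sub>R x) = (\<Sum>n. t ^ Suc n *\<^sub>R x ^ Suc (Suc n))"
    unfolding suminf_mult2[OF assms] by (simp add: power_Suc2 mult.commute del: power_Suc)
  also have "\<dots> = (\<Sum>n. t ^ n *\<^sub>R x ^ Suc n) - x"
    using suminf_split_head[OF assms] by simp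
  finally show ?thesis
    by (simp add: algebra_simps)
qed

lemma has_vector_derivative_log_series:
  fixes x :: "'b::{real_normed_algebra_1,banach}"
  assumes "norm x < 1" and "t \<in> {0..1}"
  shows "((\<lambda>t. \<Sum>n. (t ^ Suc n / real (Suc n)) *\<^sub>R x ^ Suc n)
           has_vector_derivative (\<Sum>n. t ^ n *\<^sub>R x ^ Suc n)) (at t within {0..1})"
proof -
  define f where "f n t = (t ^ Suc n / real (Suc n)) *\<^sub>R x ^ Suc n" for n t
  define a where "a n t = t ^ n *\<^sub>R x ^ Suc n" for n t
  have geom: "summable (\<lambda>n. norm x ^ Suc n)"
    using assms(1) by (simp add: summable_mult)
  have bound: "norm (a n s) \<le> norm x ^ Suc n" if "s \<in> {0..1}" for n s
    unfolding a_def using that by (intro norm_scaled_power_le power_le_one) auto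
  have df: "(f n has_derivative (\<lambda>h. h *\<^sub>R a n s)) (at s within {0..1})" for n s
  proof -
    have "((\<lambda>t. t ^ Suc n / real (Suc n)) has_real_derivative s ^ n) (at s within {0..1})"
      using DERIV_cdivide[OF DERIV_pow[of "Suc n" s], of "real (Suc n)"] by simp
    from has_vector_derivative_scaleR[OF this has_vector_derivative_const[of "x ^ Suc n"]]
    show ?thesis
      by (simp add: f_def[abs_def] a_def has_vector_derivative_def del: power_Suc)
  qed
  have unif: "uniform_limit {0..1} (\<lambda>n s. \<Sum>i<n. a i s) (\<lambda>s. \<Sum>i. a i s) sequentially"
    by (rule Weierstrass_m_test[OF bound geom])
  have "\<exists>g. \<forall>s\<in>{0..1}. (\<lambda>n. f n s) sums g s \<and>
      (g has_derivative (\<lambda>h. h *\<^sub>R (\<Sum>i. a i s))) (at s within {0..1})"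
  proof (rule has_derivative_series[where f' = "\<lambda>n s h. h *\<^sub>R a n s"])
    show "(\<lambda>n. f n 0) sums 0"
      by (simp add: f_def)
    fix e :: real assume "e > 0"
    with unif have "\<forall>\<^sub>F n in sequentially. \<forall>s\<in>{0..1}. norm ((\<Sum>i<n. a i s) - (\<Sum>i. a i s)) \<le> e"
      unfolding uniform_limit_iff dist_norm by (auto elim!: allE[of _ e] eventually_mono)
    then show "\<forall>\<^sub>F n in sequentially. \<forall>s\<in>{0..1}. \<forall>h.
        norm ((\<Sum>i<n. h *\<^sub>R a i s) - h *\<^sub>R (\<Sum>i. a i s)) \<le> e * norm h"
      by eventually_elim
         (auto simp: mult.commute[of "\<bar>_\<bar>"] intro: mult_right_mono
               simp flip: scaleR_sum_right scaleR_diff_right)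
  qed (use df in auto)
  then obtain g where g: "\<And>s. s \<in> {0..1} \<Longrightarrow> (\<lambda>n. f n s) sums g s"
      "\<And>s. s \<in> {0..1} \<Longrightarrow> (g has_derivative (\<lambda>h. h *\<^sub>R (\<Sum>i. a i s))) (at s within {0..1})"
    by blast
  show ?thesis
    unfolding has_vector_derivative_def
    by (rule has_derivative_transform[OF assms(2) _ g(2)[OF assms(2), unfolded a_def]])
       (use g(1) in \<open>auto simp: f_def a_def sums_iff\<close>)
qed

lemma exp_minus_log_series:
  fixes x :: "'b::{real_normed_algebra_1,banach}"
  assumes x: "norm x < 1"
  shows "exp (- (\<Sum>n. (1 / real (Suc n)) *\<^sub>R x ^ Suc n)) = 1 - x"
proof -
  define F where "F t = (\<Sum>n. (t ^ Suc n / real (Suc n)) *\<^sub>R x ^ Suc n)" for t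
  define g where "g t = (\<Sum>n. t ^ n *\<^sub>R x ^ Suc n)" for t
  have sum_F: "summable (\<lambda>n. (t ^ Suc n / real (Suc n)) *\<^sub>R x ^ Suc n)"
    and sum_g: "summable (\<lambda>n. t ^ n *\<^sub>R x ^ Suc n)" if "t \<in> {0..1}" for t
    using that power_le_one[of t]
    by (auto intro!: summable_scaled_powers[OF x] simp: divide_le_eq order_trans[of _ 1] simp del: power_Suc)
  have F_commute: "F s * F t = F t * F s" if "s \<in> {0..1}" "t \<in> {0..1}" for s t
    unfolding F_def by (rule suminf_mult_suminf_commute[OF sum_F[OF that(1)] sum_F[OF that(2)]])
      (simp add: power_add[symmetric] ac_simps del: power_Suc)
  \<comment> \<open>\<Psi> is constant: F has derivative g t, and g t * (1 - t x) = x\<close>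
  define \<Psi> where "\<Psi> t = exp (F t) * (1 - t *\<^sub>R x)" for t
  have "(\<Psi> has_vector_derivative 0) (at t within {0..1})" if "t \<in> {0..1}" for t
  proof -
    have "((\<lambda>s. exp (F s)) has_vector_derivative exp (F t) * g t) (at t within {0..1})"
      using has_vector_derivative_log_series[OF x that]
      by (intro has_vector_derivative_exp_commuting that F_commute) (simp_all add: F_def g_def)
    moreover have "((\<lambda>s. 1 - s *\<^sub>R x) has_vector_derivative - x) (at t within {0..1})"
      by (auto intro!: derivative_eq_intros)
    ultimately show ?thesis
      using has_vector_derivative_mult suminf_scaled_powers_mult[OF sum_g[OF that]]
      by (fastforce simp: \<Psi>_def[abs_def] g_def mult.assoc)
  qed
  then have "\<Psi> 1 = \<Psi> 0"
    by (intro has_derivative_zero_unique[of "{0..1}" \<Psi>]) (auto simp: has_vector_derivative_def)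
  then have "exp (F 1) * (1 - x) = 1"
    by (simp add: \<Psi>_def F_def)
  then have "exp (- F 1) = exp (- F 1) * (exp (F 1) * (1 - x))"
    by simp
  also have "\<dots> = 1 - x"
    using exp_minus_inverse[of "- F 1"] by (simp add: mult.assoc[symmetric])
  finally show ?thesis
    by (simp add: F_def)
qed

lemma sums_inverse_fact_plus_2: "(\<lambda>n. inverse (fact (n + 2))) sums (exp 1 - 2 :: real)"
proof -
  have "summable (\<lambda>n. inverse (fact (n + 2)) :: real)"
    using summable_ignore_initial_segment[OF summable_exp_generic[of "1::real"], of 2]
    by (simp add: divide_inverse)
  then show ?thesis
    using exp_first_two_terms[of "1::real"] by (simp add: sums_iff)
qed

lemma norm_exp_tail_term_le:
  fixes w :: "'b::real_normed_algebra_1"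
  shows "norm w \<le> 1 \<Longrightarrow> norm (inverse (fact (n + 2)) *\<^sub>R w ^ n) \<le> inverse (fact (n + 2))"
  using norm_power_ineq[of w n] power_le_one[OF norm_ge_zero, of w n]
  by (simp add: mult_left_le)

lemma exp_double_minus_one_minus:
  fixes w :: "'b::{real_normed_algebra_1,banach}"
  shows "exp (2 *\<^sub>R w) - 1 - 2 *\<^sub>R w = 2 *\<^sub>R (exp w - 1 - w) + (exp w - 1) * (exp w - 1)"
  using exp_add_commuting[of w w] by (simp add: scaleR_2 algebra_simps)

lemma exp_scaleR_add:
  fixes w :: "'b::{real_normed_algebra_1,banach}"
  shows "exp (s *\<^sub>R w) * exp (t *\<^sub>R w) = exp ((s + t) *\<^sub>R w)"
  by (simp add: exp_add_commuting[symmetric] scaleR_add_left)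

section \<open>Operators with a scalar component\<close>

(* Operators paired with a real number under the max norm: a unital Banach algebra even over the
  trivial space, where norm id_blinfun = 0. Its exp gives the exponentials of operators. *)
typedef (overloaded) 'a op_algebra = "UNIV :: (('a::real_normed_vector \<Rightarrow>\<^sub>L 'a) \<times> real) set"
  by simp

setup_lifting type_definition_op_algebra

definition op_part :: "'a::real_normed_vector op_algebra \<Rightarrow> ('a \<Rightarrow>\<^sub>L 'a)"
  where "op_part w = fst (Rep_op_algebra w)"
definition scalar_part :: "'a::real_normed_vector op_algebra \<Rightarrow> real"
  where "scalar_part w = snd (Rep_op_algebra w)"

definition op_embed :: "('a::real_normed_vector \<Rightarrow>\<^sub>L 'a) \<Rightarrow> 'a op_algebra"
  where "op_embed T = Abs_op_algebra (T, 0)"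

lemma op_part_transfer [transfer_rule]: "rel_fun cr_op_algebra (=) fst op_part"
  and scalar_part_transfer [transfer_rule]: "rel_fun cr_op_algebra (=) snd scalar_part"
  and op_embed_transfer [transfer_rule]: "rel_fun (=) cr_op_algebra (\<lambda>T. (T, 0)) op_embed"
  by (auto simp: rel_fun_def cr_op_algebra_def op_part_def scalar_part_def op_embed_def
      Abs_op_algebra_inverse)

lemma op_part_embed [simp]: "op_part (op_embed T) = T"
  and scalar_part_embed [simp]: "scalar_part (op_embed T) = 0"
  by (transfer; simp)+

lemma op_algebra_eqI: "op_part v = op_part w \<Longrightarrow> scalar_part v = scalar_part w \<Longrightarrow> v = w"
  by transfer (simp add: prod_eq_iff)

instantiation op_algebra :: (real_normed_vector) real_normed_algebra_1
begin

lift_definition zero_op_algebra :: "'a op_algebra" is 0 .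
lift_definition one_op_algebra :: "'a op_algebra" is "(id_blinfun, 1)" .
lift_definition plus_op_algebra :: "'a op_algebra \<Rightarrow> 'a op_algebra \<Rightarrow> 'a op_algebra" is "(+)" .
lift_definition minus_op_algebra :: "'a op_algebra \<Rightarrow> 'a op_algebra \<Rightarrow> 'a op_algebra" is "(-)" .
lift_definition uminus_op_algebra :: "'a op_algebra \<Rightarrow> 'a op_algebra" is uminus .
lift_definition scaleR_op_algebra :: "real \<Rightarrow> 'a op_algebra \<Rightarrow> 'a op_algebra" is scaleR .
lift_definition times_op_algebra :: "'a op_algebra \<Rightarrow> 'a op_algebra \<Rightarrow> 'a op_algebra"
  is "\<lambda>(S, a) (T, b). (S o\<^sub>L T, a * b)" .

definition norm_op_algebra :: "'a op_algebra \<Rightarrow> real"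
  where "norm_op_algebra w = max (norm (op_part w)) \<bar>scalar_part w\<bar>"
definition dist_op_algebra :: "'a op_algebra \<Rightarrow> 'a op_algebra \<Rightarrow> real"
  where "dist_op_algebra v w = norm (v - w)"
definition sgn_op_algebra :: "'a op_algebra \<Rightarrow> 'a op_algebra"
  where "sgn_op_algebra w = inverse (norm w) *\<^sub>R w"
definition uniformity_op_algebra :: "('a op_algebra \<times> 'a op_algebra) filter"
  where "uniformity_op_algebra = (INF e\<in>{0<..}. principal {(v, w). dist v w < e})"
definition open_op_algebra :: "'a op_algebra set \<Rightarrow> bool"
  where "open_op_algebra U = (\<forall>v\<in>U. \<forall>\<^sub>F (v', w) in uniformity. v' = v \<longrightarrow> w \<in> U)"

lemma op_part_add [simp]: "op_part (v + w) = op_part v + op_part w"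
  and op_part_diff [simp]: "op_part (v - w) = op_part v - op_part w"
  and op_part_minus [simp]: "op_part (- w) = - op_part w"
  and op_part_scaleR [simp]: "op_part (r *\<^sub>R w) = r *\<^sub>R op_part w"
  and op_part_mult [simp]: "op_part (v * w) = op_part v o\<^sub>L op_part w"
  and op_part_zero [simp]: "op_part 0 = 0"
  and op_part_one [simp]: "op_part 1 = id_blinfun"
  and scalar_part_add [simp]: "scalar_part (v + w) = scalar_part v + scalar_part w"
  and scalar_part_diff [simp]: "scalar_part (v - w) = scalar_part v - scalar_part w"
  and scalar_part_scaleR [simp]: "scalar_part (r *\<^sub>R w) = r * scalar_part w"
  and scalar_part_mult [simp]: "scalar_part (v * w) = scalar_part v * scalar_part w"
  and scalar_part_zero [simp]: "scalar_part 0 = 0"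
  and scalar_part_one [simp]: "scalar_part 1 = 1"
  by (transfer; auto)+

instance
proof
  fix u v w :: "'a op_algebra" and r s :: real
  show "u + v + w = u + (v + w)" "u + v = v + u" "0 + u = u" "- u + u = 0" "u - v = u + - v"
    by (transfer; simp add: algebra_simps)+
  show "r *\<^sub>R (u + v) = r *\<^sub>R u + r *\<^sub>R v" "(r + s) *\<^sub>R u = r *\<^sub>R u + s *\<^sub>R u"
    "r *\<^sub>R s *\<^sub>R u = (r * s) *\<^sub>R u" "1 *\<^sub>R u = u"
    by (transfer; simp add: algebra_simps)+
  show "u * v * w = u * (v * w)" "(u + v) * w = u * w + v * w" "u * (v + w) = u * v + u * w"
    "r *\<^sub>R u * v = r *\<^sub>R (u * v)" "u * r *\<^sub>R v = r *\<^sub>R (u * v)" "1 * u = u" "u * 1 = u"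
    by (transfer; auto simp: algebra_simps blinfun.bilinear_simps intro!: blinfun_eqI)+
  show "(0::'a op_algebra) \<noteq> 1"
    by transfer (simp add: zero_prod_def)
  show "norm u = 0 \<longleftrightarrow> u = 0"
    by (auto simp: norm_op_algebra_def max_def intro: op_algebra_eqI split: if_splits)
  show "norm (u + v) \<le> norm u + norm v"
    unfolding norm_op_algebra_def op_part_add scalar_part_add
    by (intro max.boundedI order_trans[OF norm_triangle_ineq] order_trans[OF abs_triangle_ineq]
        add_mono) auto
  show "norm (r *\<^sub>R u) = \<bar>r\<bar> * norm u"
    by (simp add: norm_op_algebra_def abs_mult max_mult_distrib_left)
  show "norm (u * v) \<le> norm u * norm v"
    unfolding norm_op_algebra_def op_part_mult scalar_part_mult abs_mult
    by (intro max.boundedI order_trans[OF norm_blinfun_compose] mult_mono) auto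
  show "norm (1::'a op_algebra) = 1"
    by (simp add: norm_op_algebra_def max_def norm_blinfun_id_le)
qed (simp_all add: dist_op_algebra_def sgn_op_algebra_def uniformity_op_algebra_def open_op_algebra_def)

end

lemma norm_op_embed [simp]: "norm (op_embed T) = norm T"
  by (simp add: norm_op_algebra_def)

lemma norm_op_part_le: "norm (op_part w) \<le> norm w"
  by (simp add: norm_op_algebra_def)

lemma bounded_linear_op_part: "bounded_linear op_part"
  by (rule bounded_linear_intro[where K=1]) (auto simp: norm_op_algebra_def)

lemma bounded_linear_scalar_part: "bounded_linear scalar_part"
  by (rule bounded_linear_intro[where K=1]) (auto simp: norm_op_algebra_def)

(* The library proves completeness of blinfun only for codomains of class banach, and the sort
  {real_inner, complete_space} of the Hilbert space in the theorem is not a subsort of banach. *)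
lemma Cauchy_blinfun_uniform_limit:
  fixes X :: "nat \<Rightarrow> 'a::real_normed_vector \<Rightarrow>\<^sub>L 'b::{real_normed_vector,complete_space}"
  assumes X: "Cauchy X"
  obtains v where "bounded_linear v" "\<And>e. 0 < e \<Longrightarrow> \<exists>N. \<forall>n\<ge>N. \<forall>x. norm (X n x - v x) \<le> e * norm x"
proof -
  define v where "v x = lim (\<lambda>n. X n x)" for x
  have v: "(\<lambda>n. X n x) \<longlonglongrightarrow> v x" for x
    using Cauchy_convergent[OF bounded_linear.Cauchy[OF blinfun.bounded_linear_left X]]
    by (simp add: v_def convergent_LIMSEQ_iff)
  have uniform: "\<exists>N. \<forall>n\<ge>N. \<forall>x. norm (X n x - v x) \<le> e * norm x" if "0 < e" for e
  proof -
    obtain N where N: "\<And>m n. m \<ge> N \<Longrightarrow> n \<ge> N \<Longrightarrow> norm (X n - X m) < e"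
      using CauchyD[OF X \<open>0 < e\<close>] by blast
    have "norm (X n x - X m x) \<le> e * norm x" if "n \<ge> N" "m \<ge> N" for n m x
    proof -
      have "norm (X n x - X m x) \<le> norm (X n - X m) * norm x"
        using norm_blinfun[of "X n - X m" x] by (simp add: blinfun.bilinear_simps)
      also have "\<dots> \<le> e * norm x"
        using N[OF that(2,1)] by (simp add: mult_right_mono)
      finally show ?thesis .
    qed
    then have "norm (X n x - v x) \<le> e * norm x" if "n \<ge> N" for n x
      using that by (intro Lim_bounded[OF tendsto_norm[OF tendsto_diff[OF tendsto_const v]]]) blast
    then show ?thesis
      by blast
  qed
  obtain N where N: "\<And>n x. n \<ge> N \<Longrightarrow> norm (X n x - v x) \<le> 1 * norm x"
    using uniform[of 1] by auto
  have "bounded_linear v"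
  proof
    fix x y r
    have "(\<lambda>n. X n (x + y)) \<longlonglongrightarrow> v x + v y" "(\<lambda>n. X n (r *\<^sub>R x)) \<longlonglongrightarrow> r *\<^sub>R v x"
      using tendsto_add[OF v v] tendsto_scaleR[OF tendsto_const v] by (simp_all add: blinfun.bilinear_simps)
    then show "v (x + y) = v x + v y" "v (r *\<^sub>R x) = r *\<^sub>R v x"
      using LIMSEQ_unique[OF v] by blast+
    have "norm (v x) \<le> norm x * (norm (X N) + 1)" for x
      using N[of N x] norm_blinfun[of "X N" x] norm_triangle_ineq3[of "X N x" "v x"]
      by (simp add: algebra_simps)
    then show "\<exists>K. \<forall>x. norm (v x) \<le> norm x * K"
      by blast
  qed
  with uniform show ?thesis
    using that by blast
qed

lemma Cauchy_blinfun_convergent: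
  fixes X :: "nat \<Rightarrow> 'a::real_normed_vector \<Rightarrow>\<^sub>L 'b::{real_normed_vector,complete_space}"
  assumes "Cauchy X"
  shows "convergent X"
proof -
  obtain v where v: "bounded_linear v" "\<And>e. 0 < e \<Longrightarrow> \<exists>N. \<forall>n\<ge>N. \<forall>x. norm (X n x - v x) \<le> e * norm x"
    using Cauchy_blinfun_uniform_limit[OF assms] by blast
  have "X \<longlonglongrightarrow> Blinfun v"
  proof (rule LIMSEQ_I)
    fix e :: real assume "0 < e"
    then obtain N where "\<forall>n\<ge>N. \<forall>x. norm (X n x - v x) \<le> e / 2 * norm x"
      using v(2)[of "e / 2"] by auto
    then have "norm (X n - Blinfun v) \<le> e / 2" if "n \<ge> N" for n
      using that \<open>0 < e\<close> v(1)
      by (intro norm_blinfun_bound) (simp_all add: blinfun.bilinear_simps bounded_linear_Blinfun_apply)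
    with \<open>0 < e\<close> have "norm (X n - Blinfun v) < e" if "n \<ge> N" for n
      using that by fastforce
    then show "\<exists>N. \<forall>n\<ge>N. norm (X n - Blinfun v) < e"
      by blast
  qed
  then show ?thesis
    by (rule convergentI)
qed

instance op_algebra :: ("{real_normed_vector,complete_space}") banach
proof
  fix X :: "nat \<Rightarrow> 'a op_algebra"
  assume "Cauchy X"
  then have "convergent (\<lambda>n. op_part (X n))" "convergent (\<lambda>n. scalar_part (X n))"
    by (simp_all add: Cauchy_convergent Cauchy_blinfun_convergent
        bounded_linear.Cauchy[OF bounded_linear_op_part] bounded_linear.Cauchy[OF bounded_linear_scalar_part])
  then obtain T c where T: "(\<lambda>n. op_part (X n)) \<longlonglongrightarrow> T" and c: "(\<lambda>n. scalar_part (X n)) \<longlonglongrightarrow> c"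
    by (auto simp: convergent_def)
  obtain l where l: "op_part l = T" "scalar_part l = c"
    by transfer auto
  have "(\<lambda>n. norm (X n - l)) = (\<lambda>n. max (norm (op_part (X n) - T)) \<bar>scalar_part (X n) - c\<bar>)"
    by (simp add: norm_op_algebra_def l)
  also have "\<dots> \<longlonglongrightarrow> max 0 0"
    by (intro tendsto_max tendsto_norm_zero tendsto_rabs_zero LIM_zero T c)
  finally have "X \<longlonglongrightarrow> l"
    by (auto intro: LIM_zero_cancel[OF tendsto_norm_zero_cancel])
  then show "convergent X"
    by (rule convergentI)
qed

lemma op_part_power: "op_part (w ^ k) = opow k (op_part w)"
  by (induction k) (simp_all add: opow_Suc)

lemmas op_part_suminf = bounded_linear.suminf[OF bounded_linear_op_part]
lemmas summable_op_part = bounded_linear.summable[OF bounded_linear_op_part]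

lemma op_part_exp:
  fixes w :: "'a::{real_normed_vector,complete_space} op_algebra"
  shows "op_part (exp w) = (\<Sum>n. (1 / fact n) *\<^sub>R opow n (op_part w))"
  unfolding exp_def op_part_suminf[OF summable_exp_generic]
  by (simp add: op_part_power divide_inverse)

section \<open>Functional calculus of strictly positive operators\<close>

definition op_algebra_log :: "('a::{real_inner,complete_space} \<Rightarrow>\<^sub>L 'a) \<Rightarrow> 'a op_algebra"
  where "op_algebra_log T = ln (norm T) *\<^sub>R 1
    - (\<Sum>n. (1 / real (Suc n)) *\<^sub>R op_embed (id_blinfun - (1 / norm T) *\<^sub>R T) ^ Suc n)"

context
  fixes T :: "'a::{real_inner,complete_space} \<Rightarrow>\<^sub>L 'a"
  assumes T: "strictly_pos T"
begin

private abbreviation "X \<equiv> op_embed (id_blinfun - (1 / norm T) *\<^sub>R T)"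

private lemma summable_X: "summable (\<lambda>n. (1 / real (Suc n)) *\<^sub>R X ^ Suc n)"
  by (rule summable_scaled_powers) (simp_all add: norm_id_minus_normalized_less_one[OF T])

lemma op_part_op_algebra_log: "op_part (op_algebra_log T) = op_log T"
  unfolding op_algebra_log_def op_log_def op_part_diff op_part_suminf[OF summable_X]
  by (simp add: op_part_power del: power_Suc)

lemma op_powr_eq_op_part_exp: "op_powr T \<nu> = op_part (exp (\<nu> *\<^sub>R op_algebra_log T))"
  unfolding op_powr_def op_part_exp op_part_scaleR op_part_op_algebra_log opow_scaleR
  by simp

lemma selfadjoint_op_algebra_log: "selfadjoint (op_part (op_algebra_log T))"
proof -
  have "selfadjoint (op_part X)"
    using strictly_pos_selfadjoint[OF T] by (simp add: selfadjoint_diff selfadjoint_scaleR)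
  then show ?thesis
    unfolding op_algebra_log_def op_part_diff op_part_suminf[OF summable_X]
    by (intro selfadjoint_diff selfadjoint_suminf summable_op_part[OF summable_X])
       (simp_all add: op_part_power selfadjoint_scaleR selfadjoint_opow del: power_Suc)
qed

lemma op_part_exp_op_algebra_log: "op_part (exp (op_algebra_log T)) = T"
proof (cases "T = 0")
  case True
  then have "id_blinfun = (0 :: 'a \<Rightarrow>\<^sub>L 'a)"
    using T by (auto simp: strictly_pos_def op_invertible_def)
  then show ?thesis
    by (metis blinfun_compose_id_left blinfun_compose_zero(1))
next
  case False
  have "exp (op_algebra_log T) = exp (ln (norm T) *\<^sub>R 1) * exp (- (\<Sum>n. (1 / real (Suc n)) *\<^sub>R X ^ Suc n))"
    unfolding op_algebra_log_def diff_conv_add_uminus by (rule exp_add_commuting) simp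
  also have "exp (ln (norm T) *\<^sub>R (1 :: 'a op_algebra)) = norm T *\<^sub>R 1"
    using exp_of_real[of "ln (norm T)", where 'a = "'a op_algebra"] False by (simp add: of_real_def)
  also have "exp (- (\<Sum>n. (1 / real (Suc n)) *\<^sub>R X ^ Suc n)) = 1 - X"
    by (rule exp_minus_log_series) (simp add: norm_id_minus_normalized_less_one[OF T])
  finally show ?thesis
    using False by simp
qed

end

lemma exp_tail_factor_nonneg:
  fixes w :: "'a::{real_inner,complete_space} op_algebra"
  assumes "norm w \<le> 1"
  shows "op_le 0 (op_part (\<Sum>n. inverse (fact (n + 2)) *\<^sub>R w ^ n))"
proof -
  \<comment> \<open>the series is id/2 plus a remainder R of norm at most e - 5/2 \<le> 1/2\<close>
  define c :: "nat \<Rightarrow> real" where "c = (\<lambda>n. inverse (fact (n + 2)))"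
  have "c sums (exp 1 - 2)"
    unfolding c_def by (rule sums_inverse_fact_plus_2)
  then have "(\<lambda>n. c (Suc n)) sums (exp 1 - 2 - c 0)"
    using sums_Suc_iff[of c "exp 1 - 2 - c 0"] by simp
  then have c: "summable (\<lambda>n. c (Suc n))" "(\<Sum>n. c (Suc n)) \<le> 1 / 2"
    using exp_le by (auto simp: sums_iff c_def)
  have bound: "norm (c n *\<^sub>R w ^ n) \<le> c n" for n
    unfolding c_def by (rule norm_exp_tail_term_le[OF assms])
  have norms: "summable (\<lambda>n. norm (c (Suc n) *\<^sub>R w ^ Suc n))"
    by (rule summable_comparison_test'[OF c(1)]) (use bound[of "Suc n" for n] in simp)
  define R where "R = (\<Sum>n. c (Suc n) *\<^sub>R w ^ Suc n)"
  have "norm (op_part R) \<le> (\<Sum>n. norm (c (Suc n) *\<^sub>R w ^ Suc n))"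
    unfolding R_def by (rule order_trans[OF norm_op_part_le summable_norm[OF norms]])
  also have "\<dots> \<le> (\<Sum>n. c (Suc n))"
    by (rule suminf_le[OF bound norms c(1)])
  finally have R: "norm (op_part R) \<le> 1 / 2"
    using c(2) by linarith
  have "(\<Sum>n. c n *\<^sub>R w ^ n) = c 0 *\<^sub>R 1 + R"
    using suminf_split_head[OF summable_Suc_iff[THEN iffD1, OF summable_norm_cancel[OF norms]]]
    unfolding R_def by simp
  then have split: "op_part (\<Sum>n. c n *\<^sub>R w ^ n) = (1 / 2) *\<^sub>R id_blinfun + op_part R"
    by (simp add: c_def)
  have "0 \<le> inner (((1 / 2) *\<^sub>R id_blinfun + op_part R) x) x" for x
    using inner_apply_le_norm[of "- op_part R" x] mult_right_mono[OF R, of "norm x ^ 2"]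
    by (simp add: blinfun.bilinear_simps power2_norm_eq_inner inner_add_left)
  then show ?thesis
    using split by (simp add: op_le_def c_def)
qed

lemma selfadjoint_op_part_exp:
  fixes w :: "'a::{real_inner,complete_space} op_algebra"
  assumes "selfadjoint (op_part w)"
  shows "selfadjoint (op_part (exp w))"
proof -
  have "summable (\<lambda>n. (1 / fact n) *\<^sub>R opow n (op_part w))"
    using summable_op_part[OF summable_exp_generic[of w]] by (simp add: op_part_power divide_inverse)
  then show ?thesis
    unfolding op_part_exp using assms by (intro selfadjoint_suminf selfadjoint_scaleR selfadjoint_opow)
qed

lemma exp_minus_one_minus_nonneg_small:
  fixes w :: "'a::{real_inner,complete_space} op_algebra"
  assumes "selfadjoint (op_part w)" "norm w \<le> 1"
  shows "op_le 0 (op_part (exp w - 1 - w))"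
proof -
  define G where "G = (\<Sum>n. inverse (fact (n + 2)) *\<^sub>R w ^ n)"
  have summable: "summable (\<lambda>n. inverse (fact (n + 2)) *\<^sub>R w ^ n)"
    by (rule summable_comparison_test'[OF sums_summable[OF sums_inverse_fact_plus_2]])
       (rule norm_exp_tail_term_le[OF assms(2)])
  have "w * G * w = (\<Sum>n. w * (inverse (fact (n + 2)) *\<^sub>R w ^ n) * w)"
    unfolding G_def suminf_mult[OF summable, symmetric] suminf_mult2[OF summable_mult[OF summable]] ..
  also have "\<dots> = exp w - 1 - w"
    by (simp add: exp_first_two_terms[of w] power_commutes mult.assoc)
  finally have "exp w - 1 - w = w * G * w" ..
  then show ?thesis
    using op_le_zero_congruence[OF assms(1) exp_tail_factor_nonneg[OF assms(2)]] by (simp add: G_def)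
qed

lemma exp_minus_one_minus_nonneg:
  fixes w :: "'a::{real_inner,complete_space} op_algebra"
  assumes w: "selfadjoint (op_part w)"
  shows "op_le 0 (op_part (exp w - 1 - w))"
proof -
  \<comment> \<open>scale w into the unit ball, then double back using exp_double_minus_one_minus\<close>
  obtain k :: nat where k: "norm w \<le> 2 ^ k"
    using real_arch_pow[of 2 "norm w"] by (auto intro: less_imp_le)
  define v where "v = (1 / 2 ^ k) *\<^sub>R w"
  have "op_le 0 (op_part (exp (2 ^ j *\<^sub>R v) - 1 - 2 ^ j *\<^sub>R v))" for j
  proof (induction j)
    case 0
    show ?case
      using w k by (intro exp_minus_one_minus_nonneg_small) (simp_all add: v_def selfadjoint_scaleR field_simps)
  next
    case (Suc j)
    define u where "u = 2 ^ j *\<^sub>R v"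
    have "selfadjoint (op_part (exp u - 1))"
      using w by (simp add: u_def v_def selfadjoint_diff selfadjoint_op_part_exp selfadjoint_scaleR)
    moreover have "2 ^ Suc j *\<^sub>R v = 2 *\<^sub>R u"
      by (simp add: u_def)
    ultimately show ?case
      using Suc.IH unfolding u_def[symmetric]
      by (simp only: exp_double_minus_one_minus op_part_add op_part_scaleR op_part_mult)
         (intro op_le_zero_add op_le_zero_scaleR op_le_zero_square, simp_all)
  qed
  from this[of k] show ?thesis
    by (simp add: v_def)
qed

lemma exp_scaleR_mult_exp_minus_one_minus_nonneg:
  fixes w :: "'a::{real_inner,complete_space} op_algebra"
  assumes w: "selfadjoint (op_part w)"
  shows "op_le 0 (op_part (exp (c *\<^sub>R w) * (exp w - 1 - w)))"
proof -
  define h where "h = exp ((c / 2) *\<^sub>R w)"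
  define g where "g = exp w - 1 - w"
  have "h * exp w = exp w * h"
    using exp_scaleR_add[of "c / 2" w 1] exp_scaleR_add[of 1 w "c / 2"] by (simp add: h_def add.commute)
  moreover have "h * w = w * h"
    unfolding h_def by (rule exp_times_scaleR_commute)
  ultimately have "h * g = g * h"
    by (simp add: g_def algebra_simps)
  moreover have "exp (c *\<^sub>R w) = h * h"
    using exp_scaleR_add[of "c / 2" w "c / 2"] by (simp add: h_def)
  ultimately have "exp (c *\<^sub>R w) * g = h * g * h"
    by (metis mult.assoc)
  moreover have "selfadjoint (op_part h)"
    unfolding h_def by (intro selfadjoint_op_part_exp) (simp add: w selfadjoint_scaleR)
  ultimately show ?thesis
    using op_le_zero_congruence[OF _ exp_minus_one_minus_nonneg[OF w]] by (simp add: g_def)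
qed

context
  fixes T :: "'a::{real_inner,complete_space} \<Rightarrow>\<^sub>L 'a"
  assumes T: "strictly_pos T"
begin

lemma op_powr_add: "op_powr T s o\<^sub>L op_powr T t = op_powr T (s + t)"
  by (simp add: op_powr_eq_op_part_exp[OF T] flip: op_part_mult exp_scaleR_add)

lemma op_powr_apply_add: "op_powr T s (op_powr T t x) = op_powr T (s + t) x"
  by (metis blinfun_apply_blinfun_compose op_powr_add)

lemma op_powr_0: "op_powr T 0 = id_blinfun"
  by (simp add: op_powr_eq_op_part_exp[OF T])

lemma op_powr_1: "op_powr T 1 = T"
  by (simp add: op_powr_eq_op_part_exp[OF T] op_part_exp_op_algebra_log[OF T])

lemma selfadjoint_op_powr: "selfadjoint (op_powr T \<nu>)"
  unfolding op_powr_eq_op_part_exp[OF T]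
  by (intro selfadjoint_op_part_exp) (simp add: selfadjoint_scaleR selfadjoint_op_algebra_log[OF T])

lemma op_powr_minus_le_op_powr_log:
  "op_le (op_powr T \<nu> - op_powr T (\<nu> - 1)) (op_powr T \<nu> o\<^sub>L op_log T)"
proof -
  define L where "L = op_algebra_log T"
  have "exp (\<nu> *\<^sub>R L) * L - (exp (\<nu> *\<^sub>R L) - exp ((\<nu> - 1) *\<^sub>R L))
      = exp ((- \<nu>) *\<^sub>R (- L)) * (exp (- L) - 1 - (- L))"
    using exp_scaleR_add[of \<nu> L "- 1"] by (simp add: algebra_simps)
  then have "(op_powr T \<nu> o\<^sub>L op_log T) - (op_powr T \<nu> - op_powr T (\<nu> - 1))
      = op_part (exp ((- \<nu>) *\<^sub>R (- L)) * (exp (- L) - 1 - (- L)))"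
    by (metis L_def op_powr_eq_op_part_exp[OF T] op_part_op_algebra_log[OF T] op_part_diff op_part_mult)
  moreover have "op_le 0 (op_part (exp ((- \<nu>) *\<^sub>R (- L)) * (exp (- L) - 1 - (- L))))"
    by (rule exp_scaleR_mult_exp_minus_one_minus_nonneg)
       (simp add: L_def selfadjoint_minus selfadjoint_op_algebra_log[OF T])
  ultimately show ?thesis
    by (subst op_le_iff_nonneg) simp
qed

lemma op_powr_log_le_op_powr_minus:
  "op_le (op_powr T \<nu> o\<^sub>L op_log T) (op_powr T (\<nu> + 1) - op_powr T \<nu>)"
proof -
  define L where "L = op_algebra_log T"
  have "exp ((\<nu> + 1) *\<^sub>R L) - exp (\<nu> *\<^sub>R L) - exp (\<nu> *\<^sub>R L) * L = exp (\<nu> *\<^sub>R L) * (exp L - 1 - L)"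
    using exp_scaleR_add[of \<nu> L 1] by (simp add: algebra_simps)
  then have "op_powr T (\<nu> + 1) - op_powr T \<nu> - (op_powr T \<nu> o\<^sub>L op_log T)
      = op_part (exp (\<nu> *\<^sub>R L) * (exp L - 1 - L))"
    by (metis L_def op_powr_eq_op_part_exp[OF T] op_part_op_algebra_log[OF T] op_part_diff op_part_mult)
  moreover have "op_le 0 (op_part (exp (\<nu> *\<^sub>R L) * (exp L - 1 - L)))"
    by (rule exp_scaleR_mult_exp_minus_one_minus_nonneg) (simp add: L_def selfadjoint_op_algebra_log[OF T])
  ultimately show ?thesis
    by (subst op_le_iff_nonneg) simp
qed

end

section \<open>Relative operator entropy\<close>

definition op_geomean :: "real \<Rightarrow> ('a::{real_inner,complete_space} \<Rightarrow>\<^sub>L 'a) \<Rightarrow> ('a \<Rightarrow>\<^sub>L 'a) \<Rightarrow> ('a \<Rightarrow>\<^sub>L 'a)"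
  where "op_geomean \<nu> A B =
    (let C = op_powr A (-1/2) o\<^sub>L B o\<^sub>L op_powr A (-1/2)
     in op_powr A (1/2) o\<^sub>L op_powr C \<nu> o\<^sub>L op_powr A (1/2))"

context
  fixes A B :: "'a::{real_inner,complete_space} \<Rightarrow>\<^sub>L 'a"
  assumes A: "strictly_pos A" and B: "strictly_pos B"
begin

private abbreviation "H \<equiv> op_powr A (1/2)"
private abbreviation "K \<equiv> op_powr A (- (1/2))"
private abbreviation "C \<equiv> K o\<^sub>L B o\<^sub>L K"

private lemma C: "strictly_pos C"
  using A by (intro strictly_pos_congruence[OF B selfadjoint_op_powr[OF A], where H = H])
    (simp_all add: op_powr_add op_powr_0)

private lemma H_K_apply [simp]: "H (K x) = x"
  and K_H_apply [simp]: "K (H x) = x"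
  using A by (simp_all add: op_powr_apply_add op_powr_0)

private lemma A_apply: "A x = H (H x)"
proof -
  have "A x = op_powr A (1/2 + 1/2) x"
    by (simp add: op_powr_1[OF A])
  then show ?thesis
    by (simp only: op_powr_apply_add[OF A])
qed

private lemma B_apply: "B x = H (op_powr C 1 (H x))"
  by (simp add: op_powr_1[OF C])

lemma op_geomean_0: "op_geomean 0 A B = A"
  by (rule blinfun_eqI) (simp add: op_geomean_def op_powr_0[OF C] A_apply)

lemma op_geomean_1: "op_geomean 1 A B = B"
  by (rule blinfun_eqI) (simp add: op_geomean_def B_apply)

lemma gen_rel_entropy_lower:
  "op_le (op_geomean \<nu> A B - op_geomean (\<nu> - 1) A B) (gen_rel_entropy \<nu> A B)"
  using op_le_congruence[OF selfadjoint_op_powr[OF A, of "1/2"] op_powr_minus_le_op_powr_log[OF C, of \<nu>]]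
  by (simp add: op_geomean_def gen_rel_entropy_def Let_def blinfun_compose_assoc
      bounded_bilinear.diff_left[OF bounded_bilinear_blinfun_compose]
      bounded_bilinear.diff_right[OF bounded_bilinear_blinfun_compose])

lemma gen_rel_entropy_upper:
  "op_le (gen_rel_entropy \<nu> A B) (op_geomean (\<nu> + 1) A B - op_geomean \<nu> A B)"
  using op_le_congruence[OF selfadjoint_op_powr[OF A, of "1/2"] op_powr_log_le_op_powr_minus[OF C, of \<nu>]]
  by (simp add: op_geomean_def gen_rel_entropy_def Let_def blinfun_compose_assoc
      bounded_bilinear.diff_left[OF bounded_bilinear_blinfun_compose]
      bounded_bilinear.diff_right[OF bounded_bilinear_blinfun_compose])

private lemma op_inv_A: "op_inv A = K o\<^sub>L K"
  using A by (intro op_inv_eqI blinfun_eqI) (simp_all add: strictly_pos_iff A_apply)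

private lemma op_inv_B: "op_inv B = K o\<^sub>L op_powr C (-1) o\<^sub>L K"
  using B by (intro op_inv_eqI blinfun_eqI)
    (simp_all add: strictly_pos_iff B_apply op_powr_apply_add[OF C] op_powr_0[OF C])

lemma op_geomean_minus_1: "op_geomean (-1) A B = A o\<^sub>L op_inv B o\<^sub>L A"
  by (rule blinfun_eqI) (simp add: op_geomean_def op_inv_B A_apply)

lemma op_geomean_minus_2: "op_geomean (-2) A B = A o\<^sub>L op_inv B o\<^sub>L A o\<^sub>L op_inv B o\<^sub>L A"
  by (rule blinfun_eqI) (simp add: op_geomean_def op_inv_B A_apply op_powr_apply_add[OF C])

lemma op_geomean_2: "op_geomean 2 A B = B o\<^sub>L op_inv A o\<^sub>L B"
  by (rule blinfun_eqI) (simp add: op_geomean_def op_inv_A B_apply op_powr_apply_add[OF C])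

end

theorem corollary5:
  fixes A B :: "nat \<Rightarrow> ('a::{real_inner,complete_space} \<Rightarrow>\<^sub>L 'a)" and n :: nat
  assumes posA: "\<And>j. j \<in> {1..n} \<Longrightarrow> strictly_pos (A j)"
    and posB: "\<And>j. j \<in> {1..n} \<Longrightarrow> strictly_pos (B j)"
    and sumA: "(\<Sum>j=1..n. A j) = id_blinfun"
    and sumB: "(\<Sum>j=1..n. B j) = id_blinfun"
  shows
    "op_le (\<Sum>j=1..n. gen_rel_entropy (-2) (A j) (B j))
           ((\<Sum>j=1..n. A j o\<^sub>L op_inv (B j) o\<^sub>L A j)
            - (\<Sum>j=1..n. A j o\<^sub>L op_inv (B j) o\<^sub>L A j o\<^sub>L op_inv (B j) o\<^sub>L A j)) \<and>
     op_le ((\<Sum>j=1..n. A j o\<^sub>L op_inv (B j) o\<^sub>L A j)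
            - (\<Sum>j=1..n. A j o\<^sub>L op_inv (B j) o\<^sub>L A j o\<^sub>L op_inv (B j) o\<^sub>L A j))
           (\<Sum>j=1..n. gen_rel_entropy (-1) (A j) (B j)) \<and>
     op_le (\<Sum>j=1..n. gen_rel_entropy (-1) (A j) (B j))
           (id_blinfun - (\<Sum>j=1..n. A j o\<^sub>L op_inv (B j) o\<^sub>L A j)) \<and>
     op_le (id_blinfun - (\<Sum>j=1..n. A j o\<^sub>L op_inv (B j) o\<^sub>L A j))
           (\<Sum>j=1..n. gen_rel_entropy 0 (A j) (B j)) \<and>
     op_le (\<Sum>j=1..n. gen_rel_entropy 0 (A j) (B j)) 0 \<and>
     op_le 0 (\<Sum>j=1..n. gen_rel_entropy 1 (A j) (B j)) \<and>
     op_le (\<Sum>j=1..n. gen_rel_entropy 1 (A j) (B j))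
           ((\<Sum>j=1..n. B j o\<^sub>L op_inv (A j) o\<^sub>L B j) - id_blinfun) \<and>
     op_le ((\<Sum>j=1..n. B j o\<^sub>L op_inv (A j) o\<^sub>L B j) - id_blinfun)
           (\<Sum>j=1..n. gen_rel_entropy 2 (A j) (B j))"
proof -
  let ?G = "\<lambda>\<nu>. \<Sum>j=1..n. op_geomean \<nu> (A j) (B j)"
  let ?S = "\<lambda>\<nu>. \<Sum>j=1..n. gen_rel_entropy \<nu> (A j) (B j)"
  have lower: "op_le (?G \<nu> - ?G (\<nu> - 1)) (?S \<nu>)" for \<nu>
    unfolding sum_subtractf[symmetric] by (intro op_le_sum gen_rel_entropy_lower posA posB)
  have upper: "op_le (?S \<nu>) (?G (\<nu> + 1) - ?G \<nu>)" for \<nu>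
    unfolding sum_subtractf[symmetric] by (intro op_le_sum gen_rel_entropy_upper posA posB)
  have "?G 0 = id_blinfun"
    unfolding sumA[symmetric] by (rule sum.cong) (simp_all add: posA posB op_geomean_0)
  moreover have "?G 1 = id_blinfun"
    unfolding sumB[symmetric] by (rule sum.cong) (simp_all add: posA posB op_geomean_1)
  moreover have "?G (-1) = (\<Sum>j=1..n. A j o\<^sub>L op_inv (B j) o\<^sub>L A j)"
    "?G (-2) = (\<Sum>j=1..n. A j o\<^sub>L op_inv (B j) o\<^sub>L A j o\<^sub>L op_inv (B j) o\<^sub>L A j)"
    "?G 2 = (\<Sum>j=1..n. B j o\<^sub>L op_inv (A j) o\<^sub>L B j)"
    by (rule sum.cong; simp add: posA posB op_geomean_minus_1 op_geomean_minus_2 op_geomean_2)+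
  ultimately show ?thesis
    using lower[of "-1"] lower[of 0] lower[of 1] lower[of 2]
      upper[of "-2"] upper[of "-1"] upper[of 0] upper[of 1]
    by simp
qed

end
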